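(* Let $G$ be a finite connected graph with a real structure, let $D_1,D_2$ be real divisors on $G$ and let $f:V(G)\to\mathbb Z$ satisfy $\Delta(f)=D_1-D_2$. Then $\overline f=f$, where $\overline f(v)=f(\overline v)$.
   Context: A finite graph $G$ has vertex set $V(G)$, edge set $E(G)$ and incidence function $\psi$ assigning to each edge a set of one or two vertices (loops and multiple edges allowed). A real structure on $G$ is a pair of involutions of $V(G)$ and $E(G)$, written $v\mapsto\overline v$, $e\mapsto\overline e$, with $\psi(\overline e)=\overline{\psi(e)}$. A divisor is a formal $\mathbb Z$-linear combination $D=\sum_v D(v)v$ of vertices; its conjugate is $\overline D(v)=D(\overline v)$, and $D$ is real if $\overline D=D$. For $f:V(G)\to\mathbb Z$, $\Delta(f)(v)=\sum_{e\in E(G),\,\psi(e)=\{v,w\}}(f(w)-f(v))$. *)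

theory Defs
  imports Main
begin

text \<open>A finite graph: vertex set V, edge set E, incidence psi assigning to each edge
  a set of one or two vertices (loops and multiple edges allowed).\<close>
definition graph :: "'v set \<Rightarrow> 'e set \<Rightarrow> ('e \<Rightarrow> 'v set) \<Rightarrow> bool" where
  "graph V E psi \<longleftrightarrow> finite V \<and> finite E \<and>
     (\<forall>e\<in>E. psi e \<subseteq> V \<and> (card (psi e) = 1 \<or> card (psi e) = 2))"

definition adjacent :: "'e set \<Rightarrow> ('e \<Rightarrow> 'v set) \<Rightarrow> 'v \<Rightarrow> 'v \<Rightarrow> bool" where
  "adjacent E psi v w \<longleftrightarrow> (\<exists>e\<in>E. psi e = {v, w})"

definition connected_graph :: "'v set \<Rightarrow> 'e set \<Rightarrow> ('e \<Rightarrow> 'v set) \<Rightarrow> bool" where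
  "connected_graph V E psi \<longleftrightarrow> graph V E psi \<and> V \<noteq> {} \<and>
     (\<forall>v\<in>V. \<forall>w\<in>V. (adjacent E psi)\<^sup>*\<^sup>* v w)"

definition real_structure ::
  "'v set \<Rightarrow> 'e set \<Rightarrow> ('e \<Rightarrow> 'v set) \<Rightarrow> ('v \<Rightarrow> 'v) \<Rightarrow> ('e \<Rightarrow> 'e) \<Rightarrow> bool" where
  "real_structure V E psi cv ce \<longleftrightarrow>
     (\<forall>v\<in>V. cv v \<in> V \<and> cv (cv v) = v) \<and>
     (\<forall>e\<in>E. ce e \<in> E \<and> ce (ce e) = e) \<and>
     (\<forall>e\<in>E. psi (ce e) = cv ` psi e)"

text \<open>Divisors are functions V \<Rightarrow> int (values outside V irrelevant).\<close>
definition real_divisor :: "'v set \<Rightarrow> ('v \<Rightarrow> 'v) \<Rightarrow> ('v \<Rightarrow> int) \<Rightarrow> bool" where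
  "real_divisor V cv D \<longleftrightarrow> (\<forall>v\<in>V. D (cv v) = D v)"

text \<open>Laplacian: sum over edges e with psi e = {v,w} of f w - f v (loops give 0).\<close>
definition laplacian :: "'e set \<Rightarrow> ('e \<Rightarrow> 'v set) \<Rightarrow> ('v \<Rightarrow> int) \<Rightarrow> 'v \<Rightarrow> int" where
  "laplacian E psi f v = (\<Sum>e\<in>{e\<in>E. v \<in> psi e}. f (THE w. psi e = {v, w}) - f v)"

end

theory Submission
  imports Defs
begin

text \<open>Conjugation commutes with the Laplacian, so \<open>g = f \<circ> conj - f\<close> satisfies
  \<open>\<Delta> g = (D1 - D2) \<circ> conj - (D1 - D2) = 0\<close>. By the maximum principle a harmonic function on a
  finite connected graph is constant, say \<open>g = c\<close>; but \<open>g (conj v) = - g v\<close>, so \<open>c = -c = 0\<close>.\<close>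

lemma card_1_or_2_doubleton:
  assumes "card A = 1 \<or> card A = 2" and "x \<in> A"
  obtains y where "A = {x, y}"
  using assms(1)
proof (elim disjE)
  assume "card A = 1"
  then obtain a where "A = {a}" by (rule card_1_singletonE)
  with assms(2) show ?thesis using that by auto
next
  assume "card A = 2"
  then obtain a b where "A = {a, b}" by (meson card_2_iff)
  with assms(2) show ?thesis using that by auto
qed

lemma the_doubleton_partner:
  assumes "A = {v, w}"
  shows "(THE w'. A = {v, w'}) = w"
  using assms by (intro the_equality) (auto simp: doubleton_eq_iff)

lemma graph_edge_doubleton:
  assumes "graph V E psi" and "e \<in> E" and "v \<in> psi e"
  obtains w where "psi e = {v, w}" and "w \<in> V"
proof -
  have "psi e \<subseteq> V" and "card (psi e) = 1 \<or> card (psi e) = 2"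
    using assms(1,2) by (auto simp: graph_def)
  with assms(3) show ?thesis
    using that by (metis card_1_or_2_doubleton insert_subset)
qed

lemma graph_adjacent_in_vertices:
  assumes "graph V E psi" and "adjacent E psi v w"
  shows "w \<in> V"
  using assms by (auto simp: graph_def adjacent_def)

lemma laplacian_diff:
  "laplacian E psi (\<lambda>v. f v - g v) v = laplacian E psi f v - laplacian E psi g v"
  unfolding laplacian_def sum_subtractf[symmetric] by (rule sum.cong) auto

lemma laplacian_conj:
  assumes graph: "graph V E psi" and real: "real_structure V E psi cv ce" and "v \<in> V"
  shows "laplacian E psi (\<lambda>v. f (cv v)) v = laplacian E psi f (cv v)"
proof -
  let ?S = "{e \<in> E. v \<in> psi e}"
  have conj_E: "\<And>e. e \<in> E \<Longrightarrow> ce e \<in> E \<and> ce (ce e) = e"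
    and conj_psi: "\<And>e. e \<in> E \<Longrightarrow> psi (ce e) = cv ` psi e"
    and conj_V: "\<And>u. u \<in> V \<Longrightarrow> cv (cv u) = u"
    using real by (auto simp: real_structure_def)
  have inj: "inj_on ce ?S"
    by (rule inj_on_inverseI[where g = ce]) (use conj_E in auto)
  have image: "ce ` ?S = {e \<in> E. cv v \<in> psi e}"
  proof (intro equalityI subsetI)
    fix e assume e: "e \<in> {e \<in> E. cv v \<in> psi e}"
    then have "psi e \<subseteq> V" using graph by (auto simp: graph_def)
    with e have "v \<in> psi (ce e)"
      using conj_psi conj_V \<open>v \<in> V\<close> by (auto intro!: image_eqI[where x = "cv v"])
    then have "ce e \<in> ?S" using e conj_E by auto
    then show "e \<in> ce ` ?S" using e conj_E by (auto intro!: image_eqI[where x = "ce e"])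
  qed (use conj_E conj_psi in auto)
  have partner: "cv (THE w. psi e = {v, w}) = (THE w. psi (ce e) = {cv v, w})" if e: "e \<in> ?S" for e
  proof -
    obtain w where w: "psi e = {v, w}" using graph_edge_doubleton[OF graph, of e v] e by blast
    then have "psi (ce e) = {cv v, cv w}" using conj_psi e by auto
    with w show ?thesis by (simp add: the_doubleton_partner)
  qed
  have "laplacian E psi f (cv v) = (\<Sum>e\<in>ce ` ?S. f (THE w. psi e = {cv v, w}) - f (cv v))"
    unfolding laplacian_def image ..
  also have "\<dots> = (\<Sum>e\<in>?S. f (THE w. psi (ce e) = {cv v, w}) - f (cv v))"
    using inj by (simp add: sum.reindex)
  also have "\<dots> = laplacian E psi (\<lambda>v. f (cv v)) v"
    unfolding laplacian_def using partner by (intro sum.cong) auto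
  finally show ?thesis by simp
qed

text \<open>At a maximum the Laplacian is a sum of non-positive terms, so it can only be
  non-negative if all of them vanish.\<close>

lemma subharmonic_max_adjacent:
  fixes g :: "'v \<Rightarrow> int"
  assumes graph: "graph V E psi" and max: "\<forall>u\<in>V. g u \<le> g x"
    and subharmonic: "0 \<le> laplacian E psi g x" and "adjacent E psi x y"
  shows "g y = g x"
proof -
  let ?S = "{e \<in> E. x \<in> psi e}"
  let ?drop = "\<lambda>e. g x - g (THE w. psi e = {x, w})"
  have drop_nonneg: "0 \<le> ?drop e" if e: "e \<in> ?S" for e
  proof -
    obtain w where "psi e = {x, w}" and "w \<in> V" using graph_edge_doubleton[OF graph, of e x] e by blast
    then show ?thesis using max by (simp add: the_doubleton_partner)
  qed
  have "sum ?drop ?S = - laplacian E psi g x"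
    by (simp add: laplacian_def sum_negf[symmetric])
  moreover have "0 \<le> sum ?drop ?S" using drop_nonneg by (rule sum_nonneg)
  ultimately have "sum ?drop ?S = 0" using subharmonic by linarith
  moreover have "finite ?S" using graph by (simp add: graph_def)
  ultimately have vanish: "\<forall>e\<in>?S. ?drop e = 0"
    using sum_nonneg_eq_0_iff[of ?S ?drop] drop_nonneg by blast
  obtain e where "e \<in> E" and e: "psi e = {x, y}"
    using \<open>adjacent E psi x y\<close> by (auto simp: adjacent_def)
  then have "?drop e = 0" using vanish by blast
  moreover have "(THE w. psi e = {x, w}) = y" using e by (rule the_doubleton_partner)
  ultimately show ?thesis by simp
qed

lemma subharmonic_connected_constant:
  fixes g :: "'v \<Rightarrow> int"
  assumes conn: "connected_graph V E psi"
    and subharmonic: "\<forall>v\<in>V. 0 \<le> laplacian E psi g v"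
    and "v \<in> V" and "w \<in> V"
  shows "g v = g w"
proof -
  have graph: "graph V E psi" using conn by (simp add: connected_graph_def)
  then have "finite V" by (simp add: graph_def)
  obtain x where "x \<in> V" and max: "\<forall>u\<in>V. g u \<le> g x"
  proof -
    have "Max (g ` V) \<in> g ` V" using \<open>finite V\<close> \<open>v \<in> V\<close> by (intro Max_in) auto
    then obtain x where "x \<in> V" and "g x = Max (g ` V)" by (metis imageE)
    moreover have "\<forall>u\<in>V. g u \<le> Max (g ` V)" using \<open>finite V\<close> by (auto intro: Max_ge)
    ultimately show thesis by (intro that) auto
  qed
  have reach: "y \<in> V \<and> g y = g x" if "(adjacent E psi)\<^sup>*\<^sup>* x y" for y
    using that
  proof (induction rule: rtranclp_induct)
    case base
    with \<open>x \<in> V\<close> show ?case by simp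
  next
    case (step y z)
    then have "y \<in> V" and "g y = g x" by simp_all
    then have "\<forall>u\<in>V. g u \<le> g y" and "0 \<le> laplacian E psi g y"
      using max subharmonic by simp_all
    then have "g z = g y"
      by (rule subharmonic_max_adjacent[OF graph _ _ \<open>adjacent E psi y z\<close>])
    moreover have "z \<in> V"
      by (rule graph_adjacent_in_vertices[OF graph \<open>adjacent E psi y z\<close>])
    ultimately show ?case using \<open>g y = g x\<close> by simp
  qed
  have "(adjacent E psi)\<^sup>*\<^sup>* x v" and "(adjacent E psi)\<^sup>*\<^sup>* x w"
    using conn \<open>x \<in> V\<close> \<open>v \<in> V\<close> \<open>w \<in> V\<close> by (simp_all add: connected_graph_def)
  then have "g v = g x" and "g w = g x" using reach by blast+
  then show ?thesis by simp
qed

theorem lemma1: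
  fixes V :: "'v set" and E :: "'e set" and psi :: "'e \<Rightarrow> 'v set"
    and cv :: "'v \<Rightarrow> 'v" and ce :: "'e \<Rightarrow> 'e"
    and D1 D2 f :: "'v \<Rightarrow> int"
  assumes "connected_graph V E psi"
    and "real_structure V E psi cv ce"
    and "real_divisor V cv D1" and "real_divisor V cv D2"
    and "\<forall>v\<in>V. laplacian E psi f v = D1 v - D2 v"
  shows "\<forall>v\<in>V. f (cv v) = f v"
proof
  fix v assume "v \<in> V"
  have graph: "graph V E psi" using assms(1) by (simp add: connected_graph_def)
  have conj_V: "\<And>u. u \<in> V \<Longrightarrow> cv u \<in> V \<and> cv (cv u) = u"
    using assms(2) by (simp add: real_structure_def)
  define g where "g = (\<lambda>u. f (cv u) - f u)"
  have harmonic: "laplacian E psi g u = 0" if "u \<in> V" for u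
  proof -
    have "laplacian E psi g u = laplacian E psi f (cv u) - laplacian E psi f u"
      by (simp add: g_def laplacian_diff laplacian_conj[OF graph assms(2) that])
    also have "\<dots> = 0"
      using assms(3-5) conj_V that by (simp add: real_divisor_def)
    finally show ?thesis .
  qed
  then have "g (cv v) = g v"
    using conj_V \<open>v \<in> V\<close> by (intro subharmonic_connected_constant[OF assms(1), of g]) auto
  moreover have "g (cv v) = - g v"
    using conj_V \<open>v \<in> V\<close> by (simp add: g_def)
  ultimately show "f (cv v) = f v" by (simp add: g_def)
qed

end
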